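(* Consider the family of single-server discrete-time queues described in the context, indexed by $\epsilon\in(0,\mu)$, satisfying the light-tail assumption. Let $\bar q^{(\epsilon)}$ be distributed according to the stationary distribution of $\{q^{(\epsilon)}(t)\}$ and let $Z^{(\epsilon)}$ be exponential with mean $\frac{(\sigma_a^{(\epsilon)})^2+\sigma_s^2}{2}$. Then there exist constants $C<\infty$ and $\epsilon_0\in(0,\mu)$, independent of $\epsilon$, such that for all $\epsilon\in(0,\epsilon_0]$, $$d_W\big(\epsilon\,\bar q^{(\epsilon)},\,Z^{(\epsilon)}\big)\le C\,\epsilon\log\frac1\epsilon .$$
   Context: Wasserstein distance: for real-valued random variables $X,Y$, $d_W(X,Y)=\sup_{h\in \mathrm{Lip}(1)}|\mathbb E[h(X)]-\mathbb E[h(Y)]|$, where $\mathrm{Lip}(1)$ is the set of functions $h:\mathbb R\to\mathbb R$ with $|h(x)-h(y)|\le|x-y|$. Single-server queue: time is slotted; $q(t+1)=q(t)+a(t)-s(t)+u(t)$ with $u(t)=\max(s(t)-a(t)-q(t),0)$. Arrivals $\{a(t)\}$ are i.i.d. nonnegative integer-valued, services $\{s(t)\}$ are i.i.d. nonnegative integer-valued, independent of each other and of past queue lengths. Service law is fixed with mean $\mu>0$ and variance $\sigma_s^2$; for each $\epsilon\in(0,\mu)$ the arrival law has mean $\mu-\epsilon$ and variance $(\sigma_a^{(\epsilon)})^2$, and there is $c_0>0$ with $(\sigma_a^{(\epsilon)})^2+\sigma_s^2\ge c_0$ for all $\epsilon$. Light-tail assumption: there are constants $\theta_1,\theta_2>0$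 and $D_1,D_2<\infty$, independent of $\epsilon$, with $\mathbb E[e^{\theta_1 a^{(\epsilon)}(t)}]\le D_1$ and $\mathbb E[e^{\theta_2 s(t)}]\le D_2$. For each $\epsilon$ the chain $\{q^{(\epsilon)}(t)\}$ is positive recurrent and its stationary distribution has finite moments of all orders. *)

theory Defs
  imports "HOL-Probability.Probability"
begin

text \<open>Taken in the extended reals so that an unbounded supremum is +infinity.\<close>
definition wasserstein :: "real measure \<Rightarrow> real measure \<Rightarrow> ereal" where
  "wasserstein M N =
     (SUP h \<in> {h :: real \<Rightarrow> real. \<forall>x y. \<bar>h x - h y\<bar> \<le> \<bar>x - y\<bar>}.
        ereal \<bar>(\<integral>x. h x \<partial>M) - (\<integral>x. h x \<partial>N)\<bar>)"

text \<open>One step of the queue: q(t+1) = q(t) + a(t) - s(t) + u(t) = max(q+a-s,0),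
  with a ~ arrival law, s ~ service law, independent of each other and of q.\<close>
definition queue_step :: "nat pmf \<Rightarrow> nat pmf \<Rightarrow> nat \<Rightarrow> nat pmf" where
  "queue_step Arr Srv q =
     bind_pmf Arr (\<lambda>a. map_pmf (\<lambda>s. nat (max (int q + int a - int s) 0)) Srv)"

definition stationary_queue :: "nat pmf \<Rightarrow> nat pmf \<Rightarrow> nat pmf \<Rightarrow> bool" where
  "stationary_queue Arr Srv P \<longleftrightarrow> bind_pmf P (queue_step Arr Srv) = P"

end

theory Submission
  imports Defs
begin

text \<open>
  Stein's method through the stationary drift. Let \<open>\<sigma>\<^sup>2\<close> be the sum of the arrival and service
  variances, \<open>Z\<close> exponential with mean \<open>\<sigma>\<^sup>2/2\<close>, and \<open>h\<close> 1-Lipschitz. The solution \<open>f\<close> of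
  the Stein equation \<open>\<sigma>\<^sup>2/2 \<cdot> f' - f = h - E h(Z)\<close> satisfies \<open>|f'| \<le> 1\<close>, and \<open>f'\<close> is
  Lipschitz with constant \<open>4/\<sigma>\<^sup>2\<close>; let \<open>G' = f\<close>. In steady state the expected one-step change
  of \<open>G(\<epsilon> q)\<close> is zero. Expanding it to second order and using \<open>E(a - s) = -\<epsilon>\<close> and
  \<open>E(a - s)\<^sup>2 = \<sigma>\<^sup>2 + \<epsilon>\<^sup>2\<close>, the Stein equation turns the drift into
  \<open>\<epsilon>\<^sup>2 (h(\<epsilon> q) - E h(Z))\<close> plus three errors: a term of order \<open>\<epsilon>\<^sup>4\<close>, a cubic Taylor
  remainder of order \<open>\<epsilon>\<^sup>3\<close>, and a term \<open>\<epsilon>\<^sup>2 E u\<^sup>2\<close> from the unused service \<open>u\<close> at the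
  boundary. Since \<open>E u = \<epsilon>\<close> and \<open>u \<le> s\<close>, truncating at \<open>K = (2/\<theta>\<^sub>2) log (1/\<epsilon>)\<close> gives
  \<open>E u\<^sup>2 \<le> K \<epsilon> + E s\<^sup>2 [s > K] = O(\<epsilon> log (1/\<epsilon>))\<close> by the light tail of \<open>s\<close>. Dividing by
  \<open>\<epsilon>\<^sup>2\<close> bounds \<open>|E h(\<epsilon> q) - E h(Z)|\<close> uniformly in \<open>h\<close>, which is the Wasserstein bound.
\<close>

section \<open>Taylor expansions with Lipschitz derivative\<close>

lemma abs_increment_le_deriv_bound:
  fixes \<phi> \<phi>' :: "real \<Rightarrow> real"
  assumes deriv: "\<And>t. (\<phi> has_real_derivative \<phi>' t) (at t)"
    and bound: "\<And>t. \<bar>t\<bar> \<le> \<bar>d\<bar> \<Longrightarrow> \<bar>\<phi>' t\<bar> \<le> B"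
  shows "\<bar>\<phi> d - \<phi> 0\<bar> \<le> B * \<bar>d\<bar>"
proof -
  obtain z where z: "\<bar>z\<bar> \<le> \<bar>d\<bar>" "\<phi> d - \<phi> 0 = d * \<phi>' z"
  proof (cases "0 < d")
    case True
    with MVT2[OF True, of \<phi> \<phi>'] deriv obtain z where "0 < z" "z < d" "\<phi> d - \<phi> 0 = (d - 0) * \<phi>' z"
      by blast
    then show ?thesis using that[of z] by simp
  next
    case False
    show ?thesis
    proof (cases "d = 0")
      case True then show ?thesis using that[of 0] by simp
    next
      case False
      with \<open>\<not> 0 < d\<close> have "d < 0" by simp
      with MVT2[OF this, of \<phi> \<phi>'] deriv obtain z where "d < z" "z < 0" "\<phi> 0 - \<phi> d = (0 - d) * \<phi>' z"
        by blast
      then show ?thesis using that[of z] by (simp add: algebra_simps)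
    qed
  qed
  then have "\<bar>\<phi> d - \<phi> 0\<bar> = \<bar>\<phi>' z\<bar> * \<bar>d\<bar>" by (simp add: abs_mult)
  also have "\<dots> \<le> B * \<bar>d\<bar>" using bound[OF z(1)] by (rule mult_right_mono) simp
  finally show ?thesis .
qed

lemma has_real_derivative_shift:
  "(\<And>x. (f has_real_derivative f' x) (at x)) \<Longrightarrow> ((\<lambda>t. f (y + t)) has_real_derivative f' (y + t)) (at t)"
  using DERIV_shift[of f "f' (t + y)" t y] by (simp add: add.commute)

lemma lipschitz_deriv_taylor1:
  fixes f f' :: "real \<Rightarrow> real"
  assumes deriv: "\<And>x. (f has_real_derivative f' x) (at x)"
    and lip: "\<And>x y. \<bar>f' x - f' y\<bar> \<le> L * \<bar>x - y\<bar>"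
  shows "\<bar>f (y + d) - f y - f' y * d\<bar> \<le> L * d^2"
proof -
  have "L \<ge> 0" using lip[of 1 0] by simp
  have "\<bar>(f (y + d) - f y - f' y * d) - (f (y + 0) - f y - f' y * 0)\<bar> \<le> (L * \<bar>d\<bar>) * \<bar>d\<bar>"
  proof (rule abs_increment_le_deriv_bound)
    show "((\<lambda>t. f (y + t) - f y - f' y * t) has_real_derivative f' (y + t) - f' y) (at t)" for t
      using has_real_derivative_shift[OF deriv] by (auto intro!: derivative_eq_intros)
    show "\<bar>f' (y + t) - f' y\<bar> \<le> L * \<bar>d\<bar>" if "\<bar>t\<bar> \<le> \<bar>d\<bar>" for t
      using lip[of "y + t" y] mult_left_mono[OF that \<open>L \<ge> 0\<close>] by simp
  qed
  then show ?thesis by (simp add: power2_eq_square abs_mult_self)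
qed

lemma lipschitz_deriv_taylor2:
  fixes G f f' :: "real \<Rightarrow> real"
  assumes G_deriv: "\<And>x. (G has_real_derivative f x) (at x)"
    and f_deriv: "\<And>x. (f has_real_derivative f' x) (at x)"
    and lip: "\<And>x y. \<bar>f' x - f' y\<bar> \<le> L * \<bar>x - y\<bar>"
  shows "\<bar>G (y + d) - G y - f y * d - f' y * d^2 / 2\<bar> \<le> L * \<bar>d\<bar>^3"
proof -
  have "L \<ge> 0" using lip[of 1 0] by simp
  have "\<bar>(G (y + d) - G y - f y * d - f' y * d^2 / 2) - (G (y + 0) - G y - f y * 0 - f' y * 0^2 / 2)\<bar>
        \<le> (L * d^2) * \<bar>d\<bar>"
  proof (rule abs_increment_le_deriv_bound)
    show "((\<lambda>t. G (y + t) - G y - f y * t - f' y * t^2 / 2) has_real_derivative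
            f (y + t) - f y - f' y * t) (at t)" for t
      using has_real_derivative_shift[OF G_deriv] by (auto intro!: derivative_eq_intros)
    show "\<bar>f (y + t) - f y - f' y * t\<bar> \<le> L * d^2" if "\<bar>t\<bar> \<le> \<bar>d\<bar>" for t
      using lipschitz_deriv_taylor1[OF f_deriv lip, of y t]
        mult_left_mono[of "t^2" "d^2" L] that \<open>L \<ge> 0\<close> abs_le_square_iff by fastforce
  qed
  then show ?thesis by (simp add: power3_eq_cube power2_eq_square abs_mult_self abs_mult mult_ac)
qed

lemma lipschitz_deriv_taylor2_truncated:
  fixes G f f' :: "real \<Rightarrow> real"
  assumes taylor: "\<And>y d. \<bar>G (y + d) - G y - f y * d - f' y * d^2 / 2\<bar> \<le> L * \<bar>d\<bar>^3"
    and f0: "f 0 = 0"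
  shows "\<bar>G (max (y + d) 0) - G y - f y * d - f' y * d^2 / 2 + f' 0 * (max (- (y + d)) 0)^2 / 2\<bar>
           \<le> L * (\<bar>d\<bar>^3 + (max (- (y + d)) 0)^3)"
proof (cases "y + d \<ge> 0")
  case True
  then show ?thesis using taylor[of y d] by (simp add: max_def)
next
  case False
  define w where "w = y + d"
  have w: "w < 0" using False by (simp add: w_def)
  have t1: "\<bar>G w - G y - f y * d - f' y * d^2 / 2\<bar> \<le> L * \<bar>d\<bar>^3"
    using taylor[of y d] by (simp add: w_def)
  have t2: "\<bar>G w - G 0 - f' 0 * w^2 / 2\<bar> \<le> L * \<bar>w\<bar>^3"
    using taylor[of 0 w] f0 by simp
  have "G 0 - G y - f y * d - f' y * d^2 / 2 + f' 0 * (- w)^2 / 2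
        = (G w - G y - f y * d - f' y * d^2 / 2) - (G w - G 0 - f' 0 * w^2 / 2)"
    by (simp add: power2_eq_square)
  also have "\<bar>\<dots>\<bar> \<le> L * \<bar>d\<bar>^3 + L * \<bar>w\<bar>^3"
    using t1 t2 abs_triangle_ineq4 by (smt (verit))
  finally show ?thesis using w by (simp add: w_def max_def distrib_left)
qed

lemma max_0_mult_pos:
  fixes e x :: real
  assumes e: "0 < e"
  shows "max (e * x) 0 = e * max x 0" and "max (- (e * x)) 0 = e * max (- x) 0"
proof -
  have "max (e * x) 0 = e * max x 0 \<and> max (- (e * x)) 0 = e * max (- x) 0"
  proof (cases "0 \<le> x")
    case True
    then have "0 \<le> e * x" using e by simp
    with True show ?thesis by (simp add: max_def)
  next
    case False
    then have "e * x < 0" using e by (simp add: mult_pos_neg)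
    with False show ?thesis by (simp add: max_def)
  qed
  then show "max (e * x) 0 = e * max x 0" and "max (- (e * x)) 0 = e * max (- x) 0" by auto
qed

section \<open>The Stein equation of the exponential distribution\<close>

locale exp_stein =
  fixes l :: real and h :: "real \<Rightarrow> real"
  assumes l_pos: "0 < l" and h_lip: "\<And>x y. \<bar>h x - h y\<bar> \<le> \<bar>x - y\<bar>"
begin

abbreviation "Exp \<equiv> density lborel (exponential_density l)"

text \<open>With \<open>l = 2 / \<sigma>\<^sup>2\<close>, the function \<open>f\<close> solves the Stein equation
  \<open>\<sigma>\<^sup>2/2 \<cdot> f'(x) - f(x) = h(x) - E h(Z)\<close> of the exponential law with mean \<open>\<sigma>\<^sup>2/2\<close>.\<close>

definition I where "I x = (\<integral>z. h (x + z) \<partial>Exp)"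
definition c where "c = (\<integral>z. h z \<partial>Exp)"
definition f where "f x = c - I x"
definition f' where "f' x = l * (f x + h x - c)"

lemma prob_space_Exp: "prob_space Exp"
  using prob_space_exponential_density[OF l_pos] .

lemma h_continuous: "continuous_on UNIV h"
  by (rule lipschitz_on_continuous_on[of 1]) (rule lipschitz_onI, auto simp: dist_real_def h_lip)

lemma h_measurable[measurable]: "h \<in> borel_measurable borel"
  using h_continuous by (rule borel_measurable_continuous_onI)

lemma measurable_Exp: "g \<in> borel_measurable borel \<Longrightarrow> g \<in> borel_measurable Exp"
  by (simp add: measurable_cong_sets[OF sets_density refl])

lemma AE_Exp_nonneg: "AE z in Exp. 0 \<le> z"
  by (subst AE_density) (auto simp: exponential_density_def)

lemma integrable_Exp_id: "integrable Exp (\<lambda>z. z)" and integral_Exp_id: "(\<integral>z. z \<partial>Exp) = 1 / l"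
proof -
  have "distributed Exp lborel (\<lambda>x. x) (exponential_density l)"
    unfolding distributed_def
    by (auto simp: distr_id2 exponential_density_nonneg[OF l_pos] intro: measurable_ident_sets)
  from prob_space.has_bochner_integral_erlang_ith_moment[OF prob_space_Exp l_pos this]
  have "has_bochner_integral Exp (\<lambda>x. x ^ 1) (fact (0 + 1) / (fact 0 * l ^ 1))" .
  then have hb: "has_bochner_integral Exp (\<lambda>x. x) (1 / l)" by simp
  from hb show "integrable Exp (\<lambda>z. z)" by (rule integrable.intros)
  from hb show "(\<integral>z. z \<partial>Exp) = 1 / l" by (rule has_bochner_integral_integral_eq)
qed

lemma integrable_Exp_shift: "integrable Exp (\<lambda>z. h (x + z))"
proof (rule Bochner_Integration.integrable_bound)
  interpret prob_space Exp by (rule prob_space_Exp)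
  show "integrable Exp (\<lambda>z. \<bar>h 0\<bar> + \<bar>x\<bar> + \<bar>z\<bar>)"
    using integrable_Exp_id by simp
  show "(\<lambda>z. h (x + z)) \<in> borel_measurable Exp" by (rule measurable_Exp) measurable
  show "AE z in Exp. norm (h (x + z)) \<le> norm (\<bar>h 0\<bar> + \<bar>x\<bar> + \<bar>z\<bar>)"
    using h_lip[of "x + z" 0 for z] by (intro AE_I2) (smt (verit) real_norm_def)
qed

lemma I_lipschitz: "\<bar>I x - I y\<bar> \<le> \<bar>x - y\<bar>"
proof -
  interpret prob_space Exp by (rule prob_space_Exp)
  have measure_UNIV: "measure Exp UNIV = 1" using prob_space by simp
  have "I x - I y = (\<integral>z. h (x + z) - h (y + z) \<partial>Exp)"
    unfolding I_def using integrable_Exp_shift by simp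
  also have "\<bar>\<dots>\<bar> \<le> (\<integral>z. \<bar>x - y\<bar> \<partial>Exp)"
    using h_lip[of "x + z" "y + z" for z]
    by (intro integral_abs_bound_integral) (auto intro!: integrable_Exp_shift)
  also have "\<dots> = \<bar>x - y\<bar>" by (simp add: measure_UNIV)
  finally show ?thesis .
qed

lemma f_zero: "f 0 = 0"
  by (simp add: f_def I_def c_def)

lemma f_lipschitz: "\<bar>f x - f y\<bar> \<le> \<bar>x - y\<bar>"
  using I_lipschitz[of y x] by (simp add: f_def abs_minus_commute)

lemma f'_eq: "f' x = l * (h x - I x)"
  by (simp add: f'_def f_def)

lemma f'_bounded: "\<bar>f' x\<bar> \<le> 1"
proof -
  interpret prob_space Exp by (rule prob_space_Exp)
  have measure_UNIV: "measure Exp UNIV = 1" using prob_space by simp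
  have "h x - I x = (\<integral>z. h x - h (x + z) \<partial>Exp)"
    unfolding I_def using integrable_Exp_shift by (simp add: measure_UNIV)
  also have "\<bar>\<dots>\<bar> \<le> (\<integral>z. \<bar>z\<bar> \<partial>Exp)"
    using h_lip[of x "x + z" for z]
    by (intro integral_abs_bound_integral) (auto intro!: integrable_Exp_shift integrable_Exp_id)
  also have "(\<integral>z. \<bar>z\<bar> \<partial>Exp) = 1 / l"
    using AE_Exp_nonneg by (subst integral_cong_AE[where g="\<lambda>z. z"]) (auto simp: integral_Exp_id)
  finally have "l * \<bar>h x - I x\<bar> \<le> 1" using l_pos by (simp add: field_simps)
  then show ?thesis using l_pos by (simp add: f'_eq abs_mult)
qed

lemma f'_lipschitz: "\<bar>f' x - f' y\<bar> \<le> 2 * l * \<bar>x - y\<bar>"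
proof -
  have "f' x - f' y = l * ((f x - f y) + (h x - h y))" by (simp add: f'_def algebra_simps)
  then have "\<bar>f' x - f' y\<bar> = l * \<bar>(f x - f y) + (h x - h y)\<bar>"
    using l_pos by (simp add: abs_mult)
  also have "\<dots> \<le> l * (\<bar>x - y\<bar> + \<bar>x - y\<bar>)"
    using f_lipschitz[of x y] h_lip[of x y] l_pos abs_triangle_ineq[of "f x - f y" "h x - h y"]
    by (intro mult_left_mono) auto
  finally show ?thesis by simp
qed

text \<open>To differentiate \<open>I\<close>, write it as \<open>l e\<^sup>l\<^sup>x \<integral>\<^sub>x\<^sup>\<infinity> h(y) e\<^sup>-\<^sup>l\<^sup>y dy\<close>.\<close>

definition weighted_h where "weighted_h y = h y * exp (- l * y)"
definition tail_integral where "tail_integral x = (LBINT y=ereal x..\<infinity>. weighted_h y)"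

lemma weighted_h_continuous: "continuous_on UNIV weighted_h"
  unfolding weighted_h_def by (intro continuous_intros h_continuous)

lemma weighted_h_measurable[measurable]: "weighted_h \<in> borel_measurable borel"
  using weighted_h_continuous by (rule borel_measurable_continuous_onI)

lemma I_eq_lborel_integral:
  shows "I x = l * exp (l * x) * (\<integral>y. indicator {x..} y * weighted_h y \<partial>lborel)"
    and "integrable lborel (\<lambda>y. indicator {x..} y * weighted_h y)"
proof -
  have dens_nonneg: "\<And>z. 0 \<le> exponential_density l z" using exponential_density_nonneg[OF l_pos] .
  define k where "k y = exponential_density l (y - x) * h y" for y
  have k_shift: "k (x + z) = exponential_density l z * h (x + z)" for z by (simp add: k_def)
  have k_eq: "k y = l * exp (l * x) * (indicator {x..} y * weighted_h y)" for y
  proof (cases "y < x")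
    case False
    have "exp (- (y - x) * l) = exp (l * x) * exp (- l * y)"
      by (subst exp_add[symmetric]) (simp add: algebra_simps)
    with False show ?thesis by (simp add: k_def exponential_density_def weighted_h_def)
  qed (simp add: k_def exponential_density_def)
  have "I x = (\<integral>z. exponential_density l z * h (x + z) \<partial>lborel)"
    unfolding I_def by (subst integral_density) (auto simp: dens_nonneg)
  also have "\<dots> = (\<integral>y. k y \<partial>lborel)"
    using lborel_integral_real_affine[of 1 k x] by (simp add: k_shift)
  also have "\<dots> = (\<integral>y. l * exp (l * x) * (indicator {x..} y * weighted_h y) \<partial>lborel)"
    by (simp only: k_eq)
  finally show "I x = l * exp (l * x) * (\<integral>y. indicator {x..} y * weighted_h y \<partial>lborel)"
    by simp
  have "integrable lborel (\<lambda>z. exponential_density l z * h (x + z))"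
    using integrable_Exp_shift[of x] by (subst (asm) integrable_density) (auto simp: dens_nonneg)
  then have "integrable lborel k"
    using lborel_integrable_real_affine_iff[of 1 k x] by (simp add: k_shift)
  then have "integrable lborel (\<lambda>y. (1 / (l * exp (l * x))) * k y)"
    by (rule integrable_mult_right)
  moreover have "(1 / (l * exp (l * x))) * k y = indicator {x..} y * weighted_h y" for y
    using l_pos by (simp add: k_eq)
  ultimately show "integrable lborel (\<lambda>y. indicator {x..} y * weighted_h y)" by simp
qed

lemma set_integrable_weighted_h: "set_integrable lborel {x<..} weighted_h"
proof (rule set_integrable_subset)
  show "set_integrable lborel {x..} weighted_h"
    unfolding set_integrable_def using I_eq_lborel_integral(2)[of x] by simp
qed auto

lemma I_eq_tail_integral: "I x = l * exp (l * x) * tail_integral x"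
proof -
  have "AE y in lborel. indicator {x..} y * weighted_h y = indicator {x<..} y *\<^sub>R weighted_h y"
    by (rule eventually_mono[OF AE_lborel_singleton[of x]]) (auto simp: indicator_def)
  then have "(\<integral>y. indicator {x..} y * weighted_h y \<partial>lborel) = (\<integral>y. indicator {x<..} y *\<^sub>R weighted_h y \<partial>lborel)"
    by (rule integral_cong_AE[rotated 2]) measurable
  also have "\<dots> = tail_integral x"
    unfolding tail_integral_def interval_integral_to_infinity_eq set_lebesgue_integral_def ..
  finally show ?thesis by (simp add: I_eq_lborel_integral(1))
qed

lemma tail_integral_deriv: "(tail_integral has_real_derivative - weighted_h x) (at x)"
proof -
  define a where "a = x - 1"
  have split: "tail_integral u = tail_integral a - (LBINT y=ereal a..ereal u. weighted_h y)"
    if "u \<in> {a<..<x + 1}" for u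
  proof -
    have "min (ereal a) (min (ereal u) \<infinity>) = ereal a" "max (ereal a) (max (ereal u) \<infinity>) = \<infinity>"
      using that by auto
    then have "(LBINT y=ereal a..ereal u. weighted_h y) + (LBINT y=ereal u..\<infinity>. weighted_h y)
          = (LBINT y=ereal a..\<infinity>. weighted_h y)"
      using set_integrable_weighted_h[of a]
      by (intro interval_integral_sum) (simp add: interval_integrable_to_infinity_eq)
    then show ?thesis by (simp add: tail_integral_def)
  qed
  have "((\<lambda>u. LBINT y=ereal a..ereal u. weighted_h y) has_vector_derivative weighted_h x)
          (at x within {a..x + 1})"
    by (rule interval_integral_FTC2)
       (auto simp: a_def intro: continuous_on_subset[OF weighted_h_continuous])
  then have "((\<lambda>u. LBINT y=ereal a..ereal u. weighted_h y) has_vector_derivative weighted_h x)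
               (at x within {a<..<x + 1})"
    by (rule has_vector_derivative_within_subset) auto
  then have "((\<lambda>u. LBINT y=ereal a..ereal u. weighted_h y) has_real_derivative weighted_h x) (at x)"
    by (subst (asm) has_vector_derivative_within_open)
       (auto simp: a_def has_real_derivative_iff_has_vector_derivative)
  then have "((\<lambda>u. tail_integral a - (LBINT y=ereal a..ereal u. weighted_h y))
               has_real_derivative - weighted_h x) (at x)"
    by (auto intro!: derivative_eq_intros)
  moreover have "x \<in> {a<..<x + 1}" by (simp add: a_def)
  ultimately show ?thesis
    by (rule has_field_derivative_transform_within_open[OF _ open_greaterThanLessThan _ split[symmetric]])
qed

lemma f_deriv: "(f has_real_derivative f' x) (at x)"
proof -
  have f_eq: "f = (\<lambda>u. c - l * exp (l * u) * tail_integral u)"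
    by (auto simp: f_def I_eq_tail_integral)
  have "((\<lambda>u. c - l * exp (l * u) * tail_integral u) has_real_derivative
          - (l * (exp (l * x) * (l * 1)) * tail_integral x + l * exp (l * x) * (- weighted_h x))) (at x)"
    by (auto intro!: derivative_eq_intros tail_integral_deriv)
  moreover have "exp (l * x) * weighted_h x = h x"
    by (simp add: weighted_h_def mult.assoc exp_add[symmetric])
  then have "- (l * (exp (l * x) * (l * 1)) * tail_integral x + l * exp (l * x) * (- weighted_h x)) = f' x"
    by (simp add: f'_eq I_eq_tail_integral algebra_simps)
  ultimately show ?thesis by (simp add: f_eq)
qed

definition G where "G = (SOME G. \<forall>x. (G has_real_derivative f x) (at x))"

lemma G_deriv: "(G has_real_derivative f x) (at x)"
proof -
  have "continuous_on UNIV f"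
    by (rule lipschitz_on_continuous_on[of 1]) (rule lipschitz_onI, auto simp: dist_real_def f_lipschitz)
  then have "\<exists>F. \<forall>x::real. -\<infinity> < ereal x \<longrightarrow> ereal x < \<infinity> \<longrightarrow> (F has_vector_derivative f x) (at x)"
    by (intro einterval_antiderivative) (auto simp: continuous_on_eq_continuous_at)
  then have "\<exists>G. \<forall>x. (G has_real_derivative f x) (at x)"
    by (auto simp: has_real_derivative_iff_has_vector_derivative)
  then show ?thesis unfolding G_def by (rule someI_ex[THEN spec])
qed

lemma G_taylor: "\<bar>G (y + d) - G y - f y * d - f' y * d^2 / 2\<bar> \<le> 2 * l * \<bar>d\<bar>^3"
  using lipschitz_deriv_taylor2[OF G_deriv f_deriv f'_lipschitz] .

end

section \<open>Expectations under probability mass functions\<close>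

lemma integral_bind_pmf_nonneg:
  fixes g :: "'b \<Rightarrow> real"
  assumes nn: "\<And>y. 0 \<le> g y" and int: "integrable (measure_pmf (bind_pmf M N)) g"
  shows "(\<integral>y. g y \<partial>bind_pmf M N) = (\<integral>x. (\<integral>y. g y \<partial>N x) \<partial>M)"
    and "integrable (measure_pmf M) (\<lambda>x. \<integral>y. g y \<partial>N x)"
    and "AE x in M. integrable (measure_pmf (N x)) g"
proof -
  define J where "J x = (\<integral>\<^sup>+y. ennreal (g y) \<partial>N x)" for x
  have fin: "(\<integral>\<^sup>+y. ennreal (g y) \<partial>bind_pmf M N) < \<infinity>"
    using int nn by (simp add: integrable_iff_bounded)
  then have fin2: "(\<integral>\<^sup>+x. J x \<partial>M) < \<infinity>" by (simp add: J_def)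
  have aeJ: "AE x in M. J x \<noteq> \<infinity>"
    using fin2 by (intro nn_integral_PInf_AE) auto
  have inner: "(\<integral>y. g y \<partial>N x) = enn2real (J x)" for x
    unfolding J_def by (rule integral_eq_nn_integral) (auto simp: nn)
  have cong: "(\<integral>\<^sup>+x. ennreal (enn2real (J x)) \<partial>M) = (\<integral>\<^sup>+x. J x \<partial>M)"
    by (rule nn_integral_cong_AE) (use aeJ in \<open>auto simp: ennreal_enn2real_if\<close>)
  have "(\<integral>y. g y \<partial>bind_pmf M N) = enn2real (\<integral>\<^sup>+y. ennreal (g y) \<partial>bind_pmf M N)"
    by (rule integral_eq_nn_integral) (auto simp: nn)
  also have "\<dots> = enn2real (\<integral>\<^sup>+x. J x \<partial>M)" by (simp add: J_def)
  also have "\<dots> = enn2real (\<integral>\<^sup>+x. ennreal (enn2real (J x)) \<partial>M)" by (simp add: cong)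
  also have "\<dots> = (\<integral>x. enn2real (J x) \<partial>M)"
    by (rule integral_eq_nn_integral[symmetric]) auto
  finally show "(\<integral>y. g y \<partial>bind_pmf M N) = (\<integral>x. (\<integral>y. g y \<partial>N x) \<partial>M)"
    by (simp add: inner)
  show "integrable (measure_pmf M) (\<lambda>x. \<integral>y. g y \<partial>N x)"
    unfolding inner by (rule integrableI_bounded) (use fin2 cong in auto)
  show "AE x in M. integrable (measure_pmf (N x)) g"
    using aeJ
  proof eventually_elim
    case (elim x)
    then show ?case unfolding J_def using nn
      by (intro integrableI_bounded) (auto simp: less_top)
  qed
qed

lemma integral_bind_pmf:
  fixes g :: "'b \<Rightarrow> real"
  assumes int: "integrable (measure_pmf (bind_pmf M N)) g"
  shows "(\<integral>y. g y \<partial>bind_pmf M N) = (\<integral>x. (\<integral>y. g y \<partial>N x) \<partial>M)"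
    and "integrable (measure_pmf M) (\<lambda>x. \<integral>y. g y \<partial>N x)"
    and "AE x in M. integrable (measure_pmf (N x)) g"
proof -
  define gp where "gp y = max (g y) 0" for y
  define gm where "gm y = max (- g y) 0" for y
  have gpm: "g y = gp y - gm y" for y by (simp add: gp_def gm_def)
  have ip: "integrable (measure_pmf (bind_pmf M N)) gp"
    unfolding gp_def by (intro integrable_max int) auto
  have im: "integrable (measure_pmf (bind_pmf M N)) gm"
    unfolding gm_def by (intro integrable_max int integrable_minus) auto
  note pos = integral_bind_pmf_nonneg[of gp M N, OF _ ip]
    and neg = integral_bind_pmf_nonneg[of gm M N, OF _ im]
  have nnp: "\<And>y. 0 \<le> gp y" and nnm: "\<And>y. 0 \<le> gm y" by (auto simp: gp_def gm_def)
  have ae: "AE x in M. integrable (measure_pmf (N x)) gp \<and> integrable (measure_pmf (N x)) gm"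
    using pos(3)[OF nnp] neg(3)[OF nnm] by eventually_elim auto
  have ae2: "AE x in M. (\<integral>y. g y \<partial>N x) = (\<integral>y. gp y \<partial>N x) - (\<integral>y. gm y \<partial>N x)"
    using ae by eventually_elim (simp add: gpm[abs_def])
  have "(\<integral>y. g y \<partial>bind_pmf M N) = (\<integral>y. gp y \<partial>bind_pmf M N) - (\<integral>y. gm y \<partial>bind_pmf M N)"
    using ip im by (simp add: gpm[abs_def])
  also have "\<dots> = (\<integral>x. (\<integral>y. gp y \<partial>N x) \<partial>M) - (\<integral>x. (\<integral>y. gm y \<partial>N x) \<partial>M)"
    using pos(1)[OF nnp] neg(1)[OF nnm] by simp
  also have "\<dots> = (\<integral>x. (\<integral>y. gp y \<partial>N x) - (\<integral>y. gm y \<partial>N x) \<partial>M)"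
    using pos(2)[OF nnp] neg(2)[OF nnm] by simp
  also have "\<dots> = (\<integral>x. (\<integral>y. g y \<partial>N x) \<partial>M)"
    by (rule integral_cong_AE) (use ae2 in \<open>auto elim: eventually_mono\<close>)
  finally show "(\<integral>y. g y \<partial>bind_pmf M N) = (\<integral>x. (\<integral>y. g y \<partial>N x) \<partial>M)" .
  have "integrable (measure_pmf M) (\<lambda>x. (\<integral>y. gp y \<partial>N x) - (\<integral>y. gm y \<partial>N x))"
    using pos(2)[OF nnp] neg(2)[OF nnm] by simp
  then show "integrable (measure_pmf M) (\<lambda>x. \<integral>y. g y \<partial>N x)"
    by (rule integrable_cong_AE_imp) (use ae2 in \<open>auto elim: eventually_mono\<close>)
  show "AE x in M. integrable (measure_pmf (N x)) g"
    using ae by eventually_elim (auto simp: gpm[abs_def])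
qed

lemma measure_pmf_integrable_bound:
  fixes g :: "'a \<Rightarrow> real"
  assumes "integrable (measure_pmf M) b" "\<And>x. \<bar>g x\<bar> \<le> b x"
  shows "integrable (measure_pmf M) g"
  using assms(1) by (rule Bochner_Integration.integrable_bound) (auto intro!: AE_I2 intro: order_trans[OF assms(2)])

lemma measure_pmf_integrable_const_bound:
  fixes g :: "'a \<Rightarrow> real"
  assumes "\<And>x. \<bar>g x\<bar> \<le> B"
  shows "integrable (measure_pmf M) g"
  by (rule measure_pmf.integrable_const_bound[where B=B]) (auto intro!: AE_I2 assms)

lemma measure_pmf_abs_integral_le:
  fixes f g :: "'a \<Rightarrow> real"
  assumes "integrable (measure_pmf M) f" "integrable (measure_pmf M) g" "\<And>x. \<bar>f x\<bar> \<le> g x"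
  shows "\<bar>\<integral>x. f x \<partial>M\<bar> \<le> (\<integral>x. g x \<partial>M)"
proof -
  have "\<bar>\<integral>x. f x \<partial>M\<bar> \<le> (\<integral>x. \<bar>f x\<bar> \<partial>M)"
    using integral_norm_bound[of M f] by simp
  also have "\<dots> \<le> (\<integral>x. g x \<partial>M)"
    by (rule integral_mono) (use assms in auto)
  finally show ?thesis .
qed

lemma measure_pmf_integral_const[simp]: "(\<integral>x. c \<partial>measure_pmf M) = (c::real)"
  by (simp add: measure_pmf.prob_space)

lemma power_le_exp:
  fixes t :: real
  assumes "0 \<le> t"
  shows "t ^ n \<le> real n ^ n * exp t"
proof (cases "n = 0")
  case False
  have "t / n \<le> exp (t / n)" using exp_ge_add_one_self[of "t / n"] by linarith
  then have "(t / n) ^ n \<le> exp (t / n) ^ n" using assms by (intro power_mono) auto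
  also have "exp (t / n) ^ n = exp t" using False by (simp add: exp_of_nat_mult[symmetric])
  finally show ?thesis using False by (simp add: power_divide field_simps)
qed (use assms in simp)

lemma exp_moment_bound:
  fixes M :: "nat pmf"
  assumes \<theta>: "0 < \<theta>" and bound: "(\<integral>\<^sup>+x. ennreal (exp (\<theta> * real x)) \<partial>measure_pmf M) \<le> ennreal D"
  shows "integrable (measure_pmf M) (\<lambda>x. exp (\<theta> * real x))"
    and "(\<integral>x. exp (\<theta> * real x) \<partial>M) \<le> D"
    and "1 \<le> D"
proof -
  have "(\<integral>\<^sup>+x. 1 \<partial>measure_pmf M) \<le> (\<integral>\<^sup>+x. ennreal (exp (\<theta> * real x)) \<partial>measure_pmf M)"
    by (intro nn_integral_mono) (use \<theta> in auto)
  then have "1 \<le> (\<integral>\<^sup>+x. ennreal (exp (\<theta> * real x)) \<partial>measure_pmf M)"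
    by (simp add: measure_pmf.emeasure_space_1)
  then have "1 \<le> ennreal D" using bound by (rule order_trans)
  then show D: "1 \<le> D" by simp
  show "integrable (measure_pmf M) (\<lambda>x. exp (\<theta> * real x))"
    by (rule integrableI_bounded) (use bound in \<open>auto simp: top_unique less_top[symmetric] intro: le_less_trans\<close>)
  have "(\<integral>x. exp (\<theta> * real x) \<partial>M) = enn2real (\<integral>\<^sup>+x. ennreal (exp (\<theta> * real x)) \<partial>measure_pmf M)"
    by (rule integral_eq_nn_integral) auto
  also have "\<dots> \<le> D" by (rule enn2real_leI) (use D bound in auto)
  finally show "(\<integral>x. exp (\<theta> * real x) \<partial>M) \<le> D" .
qed

lemma exp_dominated_moment_bound:
  fixes M :: "nat pmf" and g :: "nat \<Rightarrow> real"
  assumes \<theta>: "0 < \<theta>" and bound: "(\<integral>\<^sup>+x. ennreal (exp (\<theta> * real x)) \<partial>measure_pmf M) \<le> ennreal D"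
    and dom: "\<And>x. \<bar>g x\<bar> \<le> C * exp (\<theta> * real x)"
  shows "integrable (measure_pmf M) g" and "(\<integral>x. g x \<partial>M) \<le> C * D"
proof -
  note exp_moment = exp_moment_bound[OF \<theta> bound]
  have C: "0 \<le> C" using dom[of 0] abs_ge_zero[of "g 0"] by simp
  have integrable_exp: "integrable (measure_pmf M) (\<lambda>x. C * exp (\<theta> * real x))"
    using exp_moment(1) by simp
  show integrable_g: "integrable (measure_pmf M) g"
    by (rule measure_pmf_integrable_bound[OF integrable_exp dom])
  have "(\<integral>x. g x \<partial>M) \<le> (\<integral>x. C * exp (\<theta> * real x) \<partial>M)"
    by (rule integral_mono[OF integrable_g integrable_exp]) (use dom in \<open>auto simp: abs_le_iff\<close>)
  also have "\<dots> \<le> C * D" using exp_moment(2) C by (simp add: mult_left_mono)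
  finally show "(\<integral>x. g x \<partial>M) \<le> C * D" .
qed

definition cube_moment_const :: "real \<Rightarrow> real \<Rightarrow> real" where
  "cube_moment_const \<theta> D = 27 * exp \<theta> / \<theta>^3 * D"

lemma cube_moment_bound:
  fixes M :: "nat pmf"
  assumes \<theta>: "0 < \<theta>" and bound: "(\<integral>\<^sup>+x. ennreal (exp (\<theta> * real x)) \<partial>measure_pmf M) \<le> ennreal D"
  shows "integrable (measure_pmf M) (\<lambda>x. (1 + real x)^3)"
    and "(\<integral>x. (1 + real x)^3 \<partial>M) \<le> cube_moment_const \<theta> D"
proof -
  have "\<bar>(1 + real x)^3\<bar> \<le> (27 * exp \<theta> / \<theta>^3) * exp (\<theta> * real x)" for x
  proof -
    have "(\<theta> * (1 + real x))^3 \<le> 27 * exp (\<theta> * (1 + real x))"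
      using power_le_exp[of "\<theta> * (1 + real x)" 3] \<theta> by simp
    moreover have "exp (\<theta> * (1 + real x)) = exp \<theta> * exp (\<theta> * real x)"
      by (simp add: distrib_left exp_add)
    ultimately have "\<theta>^3 * (1 + real x)^3 \<le> 27 * exp \<theta> * exp (\<theta> * real x)"
      by (simp only: power_mult_distrib mult.assoc)
    then show ?thesis using \<theta> by (simp add: field_simps)
  qed
  from exp_dominated_moment_bound[OF \<theta> bound this]
  show "integrable (measure_pmf M) (\<lambda>x. (1 + real x)^3)"
    and "(\<integral>x. (1 + real x)^3 \<partial>M) \<le> cube_moment_const \<theta> D"
    by (simp_all add: cube_moment_const_def)
qed

lemma truncated_square_moment_bound:
  fixes M :: "nat pmf"
  assumes \<theta>: "0 < \<theta>" and bound: "(\<integral>\<^sup>+x. ennreal (exp (\<theta> * real x)) \<partial>measure_pmf M) \<le> ennreal D"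
  shows "(\<integral>s. (if K < real s then real s ^ 2 else 0) \<partial>M) \<le> (16 / \<theta>^2) * exp (- \<theta> * K / 2) * D"
proof -
  have "\<bar>if K < real s then real s ^ 2 else 0\<bar> \<le> ((16 / \<theta>^2) * exp (- \<theta> * K / 2)) * exp (\<theta> * real s)"
    for s
  proof (cases "K < real s")
    case True
    have "(\<theta> * real s / 2)^2 \<le> 4 * exp (\<theta> * real s / 2)"
      using power_le_exp[of "\<theta> * real s / 2" 2] \<theta> by simp
    then have "real s ^ 2 \<le> (16 / \<theta>^2) * exp (\<theta> * real s / 2)"
      using \<theta> by (simp add: power_mult_distrib power_divide field_simps)
    also have "\<dots> \<le> (16 / \<theta>^2) * (exp (- \<theta> * K / 2) * exp (\<theta> * real s))"
      using True \<theta> by (intro mult_left_mono) (simp_all add: exp_add[symmetric] field_simps)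
    finally show ?thesis using True by (simp add: mult.assoc)
  qed simp
  from exp_dominated_moment_bound(2)[OF \<theta> bound this] show ?thesis .
qed

section \<open>Functions of an arrival and a service\<close>

lemma of_nat_power_le_one_plus_cube: "i \<le> 3 \<Longrightarrow> real n ^ i \<le> (1 + real n)^3"
  by (rule order_trans[OF power_mono[of "real n" "1 + real n" i] power_increasing]) auto

lemma one_le_one_plus_cube: "0 \<le> (x::real) \<Longrightarrow> 1 \<le> (1 + x)^3"
  by (rule one_le_power) auto

text \<open>Cubic growth in each variable accommodates every function of one step \<open>(a, s)\<close> that
  occurs below, the worst being the cubic Taylor remainder.\<close>

definition dominated :: "(nat \<Rightarrow> nat \<Rightarrow> real) \<Rightarrow> bool" where
  "dominated \<phi> \<longleftrightarrow> (\<exists>C. \<forall>a s. \<bar>\<phi> a s\<bar> \<le> C * ((1 + real a)^3 * (1 + real s)^3))"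

lemma dominatedI: "(\<And>a s. \<bar>\<phi> a s\<bar> \<le> C * ((1 + real a)^3 * (1 + real s)^3)) \<Longrightarrow> dominated \<phi>"
  unfolding dominated_def by blast

lemma dominated_add: "dominated \<phi> \<Longrightarrow> dominated \<psi> \<Longrightarrow> dominated (\<lambda>a s. \<phi> a s + \<psi> a s)"
  unfolding dominated_def
proof (elim exE)
  fix C D assume C: "\<forall>a s. \<bar>\<phi> a s\<bar> \<le> C * ((1 + real a)^3 * (1 + real s)^3)"
    and D: "\<forall>a s. \<bar>\<psi> a s\<bar> \<le> D * ((1 + real a)^3 * (1 + real s)^3)"
  show "\<exists>E. \<forall>a s. \<bar>\<phi> a s + \<psi> a s\<bar> \<le> E * ((1 + real a)^3 * (1 + real s)^3)"
  proof (intro exI allI)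
    fix a s
    have "\<bar>\<phi> a s + \<psi> a s\<bar> \<le> \<bar>\<phi> a s\<bar> + \<bar>\<psi> a s\<bar>" by (rule abs_triangle_ineq)
    also have "\<dots> \<le> (C + D) * ((1 + real a)^3 * (1 + real s)^3)"
      using C D by (simp add: distrib_right add_mono)
    finally show "\<bar>\<phi> a s + \<psi> a s\<bar> \<le> (C + D) * ((1 + real a)^3 * (1 + real s)^3)" .
  qed
qed

lemma dominated_le: "dominated \<psi> \<Longrightarrow> (\<And>a s. \<bar>\<phi> a s\<bar> \<le> \<bar>\<psi> a s\<bar>) \<Longrightarrow> dominated \<phi>"
  unfolding dominated_def by (meson order_trans)

lemma dominated_cmult: "dominated \<phi> \<Longrightarrow> dominated (\<lambda>a s. c * \<phi> a s)"
  unfolding dominated_def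
proof (elim exE)
  fix C assume C: "\<forall>a s. \<bar>\<phi> a s\<bar> \<le> C * ((1 + real a)^3 * (1 + real s)^3)"
  show "\<exists>E. \<forall>a s. \<bar>c * \<phi> a s\<bar> \<le> E * ((1 + real a)^3 * (1 + real s)^3)"
  proof (intro exI allI)
    fix a s
    have "\<bar>c * \<phi> a s\<bar> = \<bar>c\<bar> * \<bar>\<phi> a s\<bar>" by (simp add: abs_mult)
    also have "\<dots> \<le> \<bar>c\<bar> * (C * ((1 + real a)^3 * (1 + real s)^3))"
      using C by (intro mult_left_mono) auto
    finally show "\<bar>c * \<phi> a s\<bar> \<le> (\<bar>c\<bar> * C) * ((1 + real a)^3 * (1 + real s)^3)" by (simp add: mult_ac)
  qed
qed

lemma dominated_diff: "dominated \<phi> \<Longrightarrow> dominated \<psi> \<Longrightarrow> dominated (\<lambda>a s. \<phi> a s - \<psi> a s)"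
  using dominated_add[of \<phi> "\<lambda>a s. (-1) * \<psi> a s"] dominated_cmult[of \<psi> "-1"] by simp

lemma dominated_poly: "dominated (\<lambda>a s. (1 + real a)^3 * (1 + real s)^3)"
  unfolding dominated_def by (rule exI[of _ 1]) auto

lemma dominated_const: "dominated (\<lambda>a s. c)"
proof (rule dominatedI[where C="\<bar>c\<bar>"])
  fix a s :: nat
  have "1 \<le> (1 + real a)^3 * (1 + real s)^3"
    using mult_mono[OF one_le_one_plus_cube one_le_one_plus_cube, of "real a" "real s"] by simp
  then show "\<bar>c\<bar> \<le> \<bar>c\<bar> * ((1 + real a)^3 * (1 + real s)^3)" by (simp add: mult_le_cancel_left1)
qed

lemma dominated_monomial: "i \<le> 3 \<Longrightarrow> j \<le> 3 \<Longrightarrow> dominated (\<lambda>a s. real a ^ i * real s ^ j)"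
  by (rule dominatedI[where C=1]) (auto intro!: mult_mono of_nat_power_le_one_plus_cube)

lemma dominated_arrival: "dominated (\<lambda>a s. real a)"
  using dominated_monomial[of 1 0] by simp
lemma dominated_service: "dominated (\<lambda>a s. real s)"
  using dominated_monomial[of 0 1] by simp

lemma dominated_increment: "dominated (\<lambda>a s. real a - real s)"
  by (rule dominated_diff[OF dominated_arrival dominated_service])

lemma dominated_increment_sq: "dominated (\<lambda>a s. (real a - real s)^2)"
proof -
  have "dominated (\<lambda>a s. real a ^ 2 - 2 * (real a * real s) + real s ^ 2)"
    by (intro dominated_add dominated_diff dominated_cmult)
       (use dominated_monomial[of 2 0] dominated_monomial[of 1 1] dominated_monomial[of 0 2] in simp_all)
  then show ?thesis by (rule dominated_le) (simp add: power2_eq_square algebra_simps)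
qed

locale arrival_service =
  fixes A S :: "nat pmf"
  assumes integrable_arrival_cube: "integrable (measure_pmf A) (\<lambda>a. (1 + real a)^3)"
    and integrable_service_cube: "integrable (measure_pmf S) (\<lambda>s. (1 + real s)^3)"
begin

definition EAS :: "(nat \<Rightarrow> nat \<Rightarrow> real) \<Rightarrow> real" where
  "EAS \<phi> = (\<integral>a. (\<integral>s. \<phi> a s \<partial>S) \<partial>A)"

lemma dominated_integrable_service: assumes "dominated \<phi>" shows "integrable (measure_pmf S) (\<phi> a)"
proof -
  from assms obtain C where C: "\<And>a s. \<bar>\<phi> a s\<bar> \<le> C * ((1 + real a)^3 * (1 + real s)^3)"
    unfolding dominated_def by blast
  have "integrable (measure_pmf S) (\<lambda>s. C * ((1 + real a)^3 * (1 + real s)^3))"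
    using integrable_mult_right[OF integrable_service_cube, of "C * (1 + real a)^3"] by (simp add: mult.assoc)
  then show ?thesis
    by (rule measure_pmf_integrable_bound) (rule C)
qed

lemma dominated_integrable_arrival: assumes "dominated \<phi>" shows "integrable (measure_pmf A) (\<lambda>a. \<integral>s. \<phi> a s \<partial>S)"
proof -
  from assms obtain C where C: "\<And>a s. \<bar>\<phi> a s\<bar> \<le> C * ((1 + real a)^3 * (1 + real s)^3)"
    unfolding dominated_def by blast
  define K where "K = (\<integral>s. (1 + real s)^3 \<partial>S)"
  have "integrable (measure_pmf A) (\<lambda>a. (C * K) * (1 + real a)^3)"
    by (rule integrable_mult_right[OF integrable_arrival_cube])
  moreover have "\<bar>\<integral>s. \<phi> a s \<partial>S\<bar> \<le> (C * K) * (1 + real a)^3" for a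
  proof -
    have "\<bar>\<integral>s. \<phi> a s \<partial>S\<bar> \<le> (\<integral>s. C * ((1 + real a)^3 * (1 + real s)^3) \<partial>S)"
    proof (rule measure_pmf_abs_integral_le[OF dominated_integrable_service[OF assms]])
      show "integrable (measure_pmf S) (\<lambda>s. C * ((1 + real a)^3 * (1 + real s)^3))"
        using integrable_mult_right[OF integrable_service_cube, of "C * (1 + real a)^3"] by (simp add: mult.assoc)
    qed (rule C)
    also have "\<dots> = (C * K) * (1 + real a)^3" by (simp add: K_def)
    finally show ?thesis .
  qed
  ultimately show ?thesis by (rule measure_pmf_integrable_bound)
qed

lemma EAS_add: "dominated \<phi> \<Longrightarrow> dominated \<psi> \<Longrightarrow> EAS (\<lambda>a s. \<phi> a s + \<psi> a s) = EAS \<phi> + EAS \<psi>"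
  unfolding EAS_def
  by (simp add: Bochner_Integration.integral_add[OF dominated_integrable_service dominated_integrable_service]
                Bochner_Integration.integral_add[OF dominated_integrable_arrival dominated_integrable_arrival])

lemma EAS_cmult: "EAS (\<lambda>a s. c * \<phi> a s) = c * EAS \<phi>"
  unfolding EAS_def by simp

lemma EAS_diff: "dominated \<phi> \<Longrightarrow> dominated \<psi> \<Longrightarrow> EAS (\<lambda>a s. \<phi> a s - \<psi> a s) = EAS \<phi> - EAS \<psi>"
  using EAS_add[of \<phi> "\<lambda>a s. (-1) * \<psi> a s"] dominated_cmult[of \<psi> "-1"] EAS_cmult[of "-1" \<psi>] by simp

lemma EAS_mono: "dominated \<phi> \<Longrightarrow> dominated \<psi> \<Longrightarrow> (\<And>a s. \<phi> a s \<le> \<psi> a s) \<Longrightarrow> EAS \<phi> \<le> EAS \<psi>"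
  unfolding EAS_def
  by (intro integral_mono dominated_integrable_arrival integral_mono dominated_integrable_service) auto

lemma EAS_abs: "dominated \<phi> \<Longrightarrow> dominated \<psi> \<Longrightarrow> (\<And>a s. \<bar>\<phi> a s\<bar> \<le> \<psi> a s) \<Longrightarrow> \<bar>EAS \<phi>\<bar> \<le> EAS \<psi>"
proof -
  assume g: "dominated \<phi>" "dominated \<psi>" and b: "\<And>a s. \<bar>\<phi> a s\<bar> \<le> \<psi> a s"
  have b1: "\<phi> a s \<le> \<psi> a s" for a s using b[of a s] by (simp add: abs_le_iff)
  have b2: "(-1) * \<psi> a s \<le> \<phi> a s" for a s using b[of a s] by (simp add: abs_le_iff)
  have "EAS \<phi> \<le> EAS \<psi>" by (intro EAS_mono g b1)
  moreover have "EAS (\<lambda>a s. (-1) * \<psi> a s) \<le> EAS \<phi>"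
    by (intro EAS_mono g dominated_cmult b2)
  moreover have "EAS (\<lambda>a s. (-1) * \<psi> a s) = - EAS \<psi>" by (simp only: EAS_cmult)
  ultimately show ?thesis by linarith
qed

lemma EAS_const[simp]: "EAS (\<lambda>a s. c) = c"
  unfolding EAS_def by simp

lemma EAS_arrival: "EAS (\<lambda>a s. g a) = (\<integral>a. g a \<partial>A)"
  unfolding EAS_def by simp

lemma EAS_service: "EAS (\<lambda>a s. k s) = (\<integral>s. k s \<partial>S)"
  unfolding EAS_def by simp

lemma EAS_prod: "EAS (\<lambda>a s. g a * k s) = (\<integral>a. g a \<partial>A) * (\<integral>s. k s \<partial>S)"
  unfolding EAS_def by simp

end

section \<open>The stationary queue\<close>

locale queue = arrival_service +
  fixes P :: "nat pmf" and eps :: real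
  assumes stationary: "bind_pmf P (queue_step A S) = P"
    and moments: "\<And>k. integrable (measure_pmf P) (\<lambda>q. real q ^ k)"
    and eps_pos: "0 < eps"
    and mean_gap: "(\<integral>a. real a \<partial>A) = (\<integral>s. real s \<partial>S) - eps"
begin

definition next_len :: "nat \<Rightarrow> nat \<Rightarrow> nat \<Rightarrow> nat" where "next_len q a s = nat (max (int q + int a - int s) 0)"
definition unused :: "nat \<Rightarrow> nat \<Rightarrow> nat \<Rightarrow> real" where "unused q a s = max (real s - real a - real q) 0"

lemma real_next_len: "real (next_len q a s) = real q + real a - real s + unused q a s"
  unfolding next_len_def unused_def by (simp add: max_def of_nat_diff)

lemma unused_nonneg: "0 \<le> unused q a s" and unused_le_service: "unused q a s \<le> real s"
  unfolding unused_def by auto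

lemma dominated_unused: "dominated (unused q)"
  by (rule dominated_le[OF dominated_service]) (use unused_nonneg unused_le_service in auto)

lemma integral_queue_step:
  assumes "integrable (measure_pmf (queue_step A S q)) \<Psi>"
  shows "(\<integral>y. \<Psi> y \<partial>queue_step A S q) = EAS (\<lambda>a s. \<Psi> (next_len q a s))"
  using integral_bind_pmf(1)[of A "\<lambda>a. map_pmf (\<lambda>s. next_len q a s) S" \<Psi>] assms
  by (simp add: queue_step_def next_len_def EAS_def)

lemma integral_stationary_step:
  assumes int: "integrable (measure_pmf P) \<Psi>"
  shows "(\<integral>q. EAS (\<lambda>a s. \<Psi> (next_len q a s)) \<partial>P) = (\<integral>q. \<Psi> q \<partial>P)"
    and "integrable (measure_pmf P) (\<lambda>q. EAS (\<lambda>a s. \<Psi> (next_len q a s)))"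
proof -
  have "integrable (measure_pmf (bind_pmf P (queue_step A S))) \<Psi>" by (simp add: stationary int)
  note B = integral_bind_pmf[OF this]
  have ae: "AE q in P. (\<integral>y. \<Psi> y \<partial>queue_step A S q) = EAS (\<lambda>a s. \<Psi> (next_len q a s))"
    using B(3) by eventually_elim (rule integral_queue_step)
  have "(\<integral>q. EAS (\<lambda>a s. \<Psi> (next_len q a s)) \<partial>P) = (\<integral>q. (\<integral>y. \<Psi> y \<partial>queue_step A S q) \<partial>P)"
    by (rule integral_cong_AE) (use ae in \<open>auto elim: eventually_mono\<close>)
  also have "\<dots> = (\<integral>y. \<Psi> y \<partial>bind_pmf P (queue_step A S))" using B(1) by simp
  also have "\<dots> = (\<integral>q. \<Psi> q \<partial>P)" by (simp add: stationary)
  finally show "(\<integral>q. EAS (\<lambda>a s. \<Psi> (next_len q a s)) \<partial>P) = (\<integral>q. \<Psi> q \<partial>P)" .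
  show "integrable (measure_pmf P) (\<lambda>q. EAS (\<lambda>a s. \<Psi> (next_len q a s)))"
    using B(2) by (rule integrable_cong_AE_imp) (use ae in \<open>auto elim: eventually_mono\<close>)
qed

lemma abs_EAS_unused_le: "\<bar>EAS (unused q)\<bar> \<le> (\<integral>s. real s \<partial>S)"
proof -
  have "\<bar>EAS (unused q)\<bar> \<le> EAS (\<lambda>a s. real s)"
    by (rule EAS_abs[OF dominated_unused dominated_service]) (use unused_nonneg unused_le_service in auto)
  then show ?thesis by (simp add: EAS_service)
qed

lemma integrable_EAS_unused: "integrable (measure_pmf P) (\<lambda>q. EAS (unused q))"
  by (rule measure_pmf_integrable_const_bound) (rule abs_EAS_unused_le)

lemma integral_EAS_unused: "(\<integral>q. EAS (unused q) \<partial>P) = eps"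
proof -
  have i1: "integrable (measure_pmf P) (\<lambda>q. real q)" using moments[of 1] by simp
  have "EAS (\<lambda>a s. real (next_len q a s)) = real q + ((\<integral>a. real a \<partial>A) - (\<integral>s. real s \<partial>S)) + EAS (unused q)" for q
  proof -
    have "EAS (\<lambda>a s. real (next_len q a s)) = EAS (\<lambda>a s. ((real q + real a) - real s) + unused q a s)"
      by (simp add: real_next_len)
    also have "\<dots> = EAS (\<lambda>a s. (real q + real a) - real s) + EAS (unused q)"
      by (intro EAS_add dominated_diff dominated_add dominated_const dominated_arrival dominated_service dominated_unused)
    also have "EAS (\<lambda>a s. (real q + real a) - real s) = EAS (\<lambda>a s. real q + real a) - EAS (\<lambda>a s. real s)"
      by (intro EAS_diff dominated_add dominated_const dominated_arrival dominated_service)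
    also have "EAS (\<lambda>a s. real q + real a) = real q + EAS (\<lambda>a s. real a)"
      by (subst EAS_add) (auto intro: dominated_const dominated_arrival)
    finally show ?thesis by (simp add: EAS_arrival EAS_service)
  qed
  then have "(\<integral>q. real q + (- eps) + EAS (unused q) \<partial>P) = (\<integral>q. real q \<partial>P)"
    using integral_stationary_step(1)[OF i1] by (simp add: mean_gap)
  then show ?thesis using i1 integrable_EAS_unused by simp
qed

lemma dominated_unused_sq: "dominated (\<lambda>a s. (unused q a s)^2)"
  using dominated_monomial[of 0 2]
  by (rule dominated_le) (use unused_nonneg unused_le_service in \<open>auto intro: power_mono\<close>)

lemma EAS_unused_sq_bounds:
  "0 \<le> EAS (\<lambda>a s. (unused q a s)^2)" "EAS (\<lambda>a s. (unused q a s)^2) \<le> (\<integral>s. real s ^ 2 \<partial>S)"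
proof -
  show "0 \<le> EAS (\<lambda>a s. (unused q a s)^2)"
    using EAS_mono[OF dominated_const dominated_unused_sq, of 0 q] by simp
  show "EAS (\<lambda>a s. (unused q a s)^2) \<le> (\<integral>s. real s ^ 2 \<partial>S)"
    using EAS_mono[OF dominated_unused_sq dominated_monomial[of 0 2]] unused_nonneg unused_le_service
    by (simp add: EAS_service power_mono)
qed

lemma integrable_EAS_unused_sq: "integrable (measure_pmf P) (\<lambda>q. EAS (\<lambda>a s. (unused q a s)^2))"
  using EAS_unused_sq_bounds by (intro measure_pmf_integrable_const_bound) (simp add: abs_le_iff)

text \<open>Truncating at \<open>K\<close>: \<open>u\<^sup>2 \<le> K u + s\<^sup>2 [s > K]\<close>, and \<open>E u = \<epsilon>\<close>.\<close>

lemma integral_EAS_unused_sq_le: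
  assumes K: "0 \<le> K"
  shows "(\<integral>q. EAS (\<lambda>a s. (unused q a s)^2) \<partial>P)
           \<le> K * eps + (\<integral>s. (if K < real s then real s ^ 2 else 0) \<partial>S)"
proof -
  define tail where "tail s = (if K < real s then real s ^ 2 else 0)" for s :: nat
  have dominated_tail: "dominated (\<lambda>a s. tail s)"
    by (rule dominated_le[OF dominated_monomial[of 0 2]]) (simp_all add: tail_def)
  have truncate: "(unused q a s)^2 \<le> K * unused q a s + tail s" for q a s
  proof (cases "K < real s")
    case True
    then have "(unused q a s)^2 \<le> real s ^ 2"
      using unused_nonneg unused_le_service by (intro power_mono) auto
    moreover have "0 \<le> K * unused q a s" using K unused_nonneg by simp
    ultimately show ?thesis using True by (simp add: tail_def)
  next
    case False
    then have "unused q a s * unused q a s \<le> unused q a s * K"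
      using unused_nonneg[of q a s] unused_le_service[of q a s] by (intro mult_left_mono) auto
    then show ?thesis using False by (simp add: tail_def power2_eq_square mult.commute)
  qed
  have "EAS (\<lambda>a s. (unused q a s)^2) \<le> K * EAS (unused q) + (\<integral>s. tail s \<partial>S)" for q
  proof -
    have "EAS (\<lambda>a s. (unused q a s)^2) \<le> EAS (\<lambda>a s. K * unused q a s + tail s)"
      by (intro EAS_mono dominated_unused_sq dominated_add dominated_cmult dominated_unused
          dominated_tail truncate)
    also have "\<dots> = K * EAS (unused q) + (\<integral>s. tail s \<partial>S)"
      by (simp add: EAS_add dominated_cmult dominated_unused dominated_tail EAS_cmult EAS_service)
    finally show ?thesis .
  qed
  then have "(\<integral>q. EAS (\<lambda>a s. (unused q a s)^2) \<partial>P) \<le> (\<integral>q. K * EAS (unused q) + (\<integral>s. tail s \<partial>S) \<partial>P)"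
    by (intro integral_mono integrable_EAS_unused_sq) (use integrable_EAS_unused in auto)
  also have "\<dots> = K * eps + (\<integral>s. tail s \<partial>S)"
    using integrable_EAS_unused integral_EAS_unused by simp
  finally show ?thesis by (simp add: tail_def)
qed

end

section \<open>The drift of the Stein antiderivative\<close>

locale queue_stein = queue A S P eps + exp_stein l h for A S P eps l h +
  assumes rate_variance: "l * (measure_pmf.variance A real + measure_pmf.variance S real) = 2"
begin

abbreviation "VA \<equiv> measure_pmf.variance A real"
abbreviation "VS \<equiv> measure_pmf.variance S real"

lemma stein_equation: "(VA + VS) / 2 * f' x - f x = h x - c"
proof -
  have "(VA + VS) / 2 * f' x = l * (VA + VS) / 2 * (f x + h x - c)" by (simp add: f'_def)
  then show ?thesis using rate_variance by (simp add: field_simps)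
qed

lemma EAS_increment: "EAS (\<lambda>a s. real a - real s) = - eps"
  by (subst EAS_diff[OF dominated_arrival dominated_service]) (simp add: EAS_arrival EAS_service mean_gap)

lemma EAS_increment_sq: "EAS (\<lambda>a s. (real a - real s)^2) = VA + VS + eps^2"
proof -
  have g1: "dominated (\<lambda>a s. real a ^ 2)" using dominated_monomial[of 2 0] by simp
  have g2: "dominated (\<lambda>a s. 2 * (real a * real s))"
    using dominated_cmult[OF dominated_monomial[of 1 1], of 2] by simp
  have g3: "dominated (\<lambda>a s. real s ^ 2)" using dominated_monomial[of 0 2] by simp
  have "EAS (\<lambda>a s. (real a - real s)^2)
        = EAS (\<lambda>a s. (real a ^ 2 - 2 * (real a * real s)) + real s ^ 2)"
    by (simp add: power2_eq_square algebra_simps)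
  also have "\<dots> = EAS (\<lambda>a s. real a ^ 2) - EAS (\<lambda>a s. 2 * (real a * real s)) + EAS (\<lambda>a s. real s ^ 2)"
    by (simp add: EAS_add EAS_diff dominated_diff g1 g2 g3)
  also have "\<dots> = (\<integral>a. real a ^ 2 \<partial>A) - 2 * ((\<integral>a. real a \<partial>A) * (\<integral>s. real s \<partial>S)) + (\<integral>s. real s ^ 2 \<partial>S)"
    by (simp add: EAS_arrival EAS_service EAS_cmult EAS_prod)
  also have "(\<integral>a. real a ^ 2 \<partial>A) = VA + (\<integral>a. real a \<partial>A)^2"
    using dominated_integrable_arrival[OF dominated_monomial[of 1 0]]
      dominated_integrable_arrival[OF dominated_monomial[of 2 0]]
    by (subst measure_pmf.variance_eq) auto
  also have "(\<integral>s. real s ^ 2 \<partial>S) = VS + (\<integral>s. real s \<partial>S)^2"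
    using dominated_integrable_service[OF dominated_monomial[of 0 1]]
      dominated_integrable_service[OF dominated_monomial[of 0 2]]
    by (subst measure_pmf.variance_eq) auto
  finally show ?thesis by (simp add: mean_gap power2_eq_square algebra_simps)
qed

definition jump_cube :: "nat \<Rightarrow> nat \<Rightarrow> real" where
  "jump_cube a s = (real a + real s)^3 + real s ^ 3"

lemma jump_cube_le: "jump_cube a s \<le> 2 * ((1 + real a)^3 * (1 + real s)^3)"
proof -
  have "real a + real s \<le> (1 + real a) * (1 + real s)" by (simp add: algebra_simps)
  then have sum: "(real a + real s)^3 \<le> (1 + real a)^3 * (1 + real s)^3"
    by (metis power_mono power_mult_distrib add_nonneg_nonneg of_nat_0_le_iff)
  have "real s ^ 3 \<le> (1 + real s)^3" by (rule of_nat_power_le_one_plus_cube) simp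
  also have "\<dots> \<le> (1 + real a)^3 * (1 + real s)^3"
    using one_le_one_plus_cube[of "real a"] by (simp add: mult_le_cancel_right1)
  finally show ?thesis using sum by (simp add: jump_cube_def)
qed

lemma dominated_jump_cube: "dominated jump_cube"
  using jump_cube_le by (intro dominatedI[where C=2]) (simp add: jump_cube_def)

lemma increment_cube_le_jump_cube: "\<bar>real a - real s\<bar>^3 + (unused q a s)^3 \<le> jump_cube a s"
  unfolding jump_cube_def
  using unused_nonneg unused_le_service by (intro add_mono power_mono) auto

lemma EAS_jump_cube_le:
  "EAS jump_cube \<le> 2 * ((\<integral>a. (1 + real a)^3 \<partial>A) * (\<integral>s. (1 + real s)^3 \<partial>S))"
proof -
  have "EAS jump_cube \<le> EAS (\<lambda>a s. 2 * ((1 + real a)^3 * (1 + real s)^3))"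
    by (intro EAS_mono dominated_jump_cube dominated_cmult dominated_poly jump_cube_le)
  then show ?thesis by (simp add: EAS_cmult EAS_prod)
qed

definition G_scaled :: "nat \<Rightarrow> real" where "G_scaled n = G (eps * real n)"

lemma abs_G_scaled_le: "\<bar>G_scaled n\<bar> \<le> \<bar>G 0\<bar> + eps^2 / 2 * real n ^ 2 + 2 * l * eps^3 * real n ^ 3"
proof -
  have taylor: "\<bar>G (eps * real n) - G 0 - f' 0 * (eps * real n)^2 / 2\<bar> \<le> 2 * l * \<bar>eps * real n\<bar>^3"
    using G_taylor[of 0 "eps * real n"] f_zero by simp
  have "\<bar>f' 0 * (eps * real n)^2 / 2\<bar> = \<bar>f' 0\<bar> * (eps^2 / 2 * real n ^ 2)"
    by (simp add: abs_mult power_mult_distrib)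
  also have "\<dots> \<le> eps^2 / 2 * real n ^ 2"
    using f'_bounded[of 0] mult_right_mono[of "\<bar>f' 0\<bar>" 1 "eps^2 / 2 * real n ^ 2"] by simp
  finally show ?thesis
    using taylor eps_pos by (simp add: G_scaled_def power_mult_distrib)
qed

lemma integrable_G_scaled: "integrable (measure_pmf P) G_scaled"
  by (rule measure_pmf_integrable_bound[OF _ abs_G_scaled_le]) (use moments[of 2] moments[of 3] in auto)

text \<open>The last term corrects the expansion for the reflection at zero.\<close>

definition taylor_rem :: "nat \<Rightarrow> nat \<Rightarrow> nat \<Rightarrow> real" where
  "taylor_rem q a s = G_scaled (next_len q a s) - G_scaled q
     - f (eps * real q) * eps * (real a - real s)
     - f' (eps * real q) * eps^2 * (real a - real s)^2 / 2
     + f' 0 * eps^2 * (unused q a s)^2 / 2"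

lemma abs_taylor_rem_le: "\<bar>taylor_rem q a s\<bar> \<le> 2 * l * eps^3 * jump_cube a s"
proof -
  define y where "y = eps * real q"
  define d where "d = eps * (real a - real s)"
  define x where "x = real q + real a - real s"
  have "y + d = eps * x" by (simp add: y_def d_def x_def algebra_simps)
  then have next_eq: "max (y + d) 0 = eps * real (next_len q a s)"
    and unused_eq: "max (- (y + d)) 0 = eps * unused q a s"
    using max_0_mult_pos[OF eps_pos, of x]
    by (simp_all add: real_next_len unused_def x_def max_def)
  have "taylor_rem q a s = G (max (y + d) 0) - G y - f y * d - f' y * d^2 / 2
          + f' 0 * (max (- (y + d)) 0)^2 / 2"
    unfolding next_eq unused_eq
    by (simp add: taylor_rem_def G_scaled_def y_def d_def power_mult_distrib mult_ac)
  also have "\<bar>\<dots>\<bar> \<le> 2 * l * (\<bar>d\<bar>^3 + (max (- (y + d)) 0)^3)"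
    by (rule lipschitz_deriv_taylor2_truncated[OF G_taylor f_zero])
  also have "\<dots> = 2 * l * (\<bar>eps * (real a - real s)\<bar>^3 + (eps * unused q a s)^3)"
    unfolding unused_eq by (simp only: d_def)
  also have "\<dots> = 2 * l * eps^3 * (\<bar>real a - real s\<bar>^3 + (unused q a s)^3)"
    using eps_pos by (simp add: abs_mult power_mult_distrib distrib_left)
  also have "\<dots> \<le> 2 * l * eps^3 * jump_cube a s"
    using increment_cube_le_jump_cube l_pos eps_pos by (intro mult_left_mono) auto
  finally show ?thesis .
qed

lemma dominated_taylor_rem: "dominated (taylor_rem q)"
  by (rule dominated_le[OF dominated_cmult[OF dominated_jump_cube, of "2 * l * eps^3"]])
     (rule order_trans[OF abs_taylor_rem_le abs_ge_self])

lemma abs_EAS_taylor_rem_le: "\<bar>EAS (taylor_rem q)\<bar> \<le> 2 * l * eps^3 * EAS jump_cube"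
  using EAS_abs[OF dominated_taylor_rem dominated_cmult[OF dominated_jump_cube], of q "2 * l * eps^3"]
    abs_taylor_rem_le by (simp add: EAS_cmult)

definition drift_rest :: "nat \<Rightarrow> real" where
  "drift_rest q = eps^4 / 2 * f' (eps * real q) - f' 0 * eps^2 / 2 * EAS (\<lambda>a s. (unused q a s)^2)
     + EAS (taylor_rem q)"

text \<open>The first- and second-order terms of the drift combine, via
  \<open>E(a - s) = -\<epsilon>\<close>, \<open>E(a - s)\<^sup>2 = \<sigma>\<^sup>2 + \<epsilon>\<^sup>2\<close> and the Stein equation, into \<open>\<epsilon>\<^sup>2 (h(\<epsilon> q) - E h(Z))\<close>.\<close>

lemma EAS_G_scaled_drift:
  "EAS (\<lambda>a s. G_scaled (next_len q a s)) - G_scaled q = eps^2 * (h (eps * real q) - c) + drift_rest q"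
proof -
  define y where "y = eps * real q"
  define D where "D a s = real a - real s" for a s :: nat
  define c1 where "c1 = f y * eps"
  define c2 where "c2 = f' y * eps^2 / 2"
  define c3 where "c3 = f' 0 * eps^2 / 2"
  have step: "G_scaled (next_len q a s)
      = (((G_scaled q + c1 * D a s) + c2 * (D a s)^2) - c3 * (unused q a s)^2) + taylor_rem q a s" for a s
    by (simp add: taylor_rem_def c1_def c2_def c3_def y_def D_def)
  have dD: "dominated D" and dD2: "dominated (\<lambda>a s. (D a s)^2)"
    unfolding D_def by (rule dominated_increment dominated_increment_sq)+
  have d1: "dominated (\<lambda>a s. G_scaled q + c1 * D a s)"
    by (intro dominated_add dominated_const dominated_cmult dD)
  have d12: "dominated (\<lambda>a s. (G_scaled q + c1 * D a s) + c2 * (D a s)^2)"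
    by (intro dominated_add d1 dominated_cmult dD2)
  have d3: "dominated (\<lambda>a s. c3 * (unused q a s)^2)"
    by (intro dominated_cmult dominated_unused_sq)
  define V where "V = VA + VS"
  have "EAS (\<lambda>a s. G_scaled (next_len q a s))
      = G_scaled q + c1 * EAS D + c2 * EAS (\<lambda>a s. (D a s)^2)
        - c3 * EAS (\<lambda>a s. (unused q a s)^2) + EAS (taylor_rem q)"
    unfolding step
    by (simp add: EAS_add EAS_diff EAS_cmult dominated_diff d1 d12 d3 dominated_taylor_rem
        dominated_const dominated_cmult dD dD2)
  also have "EAS D = - eps" using EAS_increment by (simp add: D_def[abs_def])
  also have "EAS (\<lambda>a s. (D a s)^2) = V + eps^2" using EAS_increment_sq by (simp add: D_def V_def)
  finally have expansion: "EAS (\<lambda>a s. G_scaled (next_len q a s))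
      = G_scaled q + c1 * (- eps) + c2 * (V + eps^2)
        - c3 * EAS (\<lambda>a s. (unused q a s)^2) + EAS (taylor_rem q)" .
  have "c2 * V = eps^2 * (V / 2 * f' y)" by (simp add: c2_def)
  also have "V / 2 * f' y = f y + h y - c" using stein_equation[of y, folded V_def] by simp
  finally have stein: "c2 * V = eps^2 * (f y + h y - c)" .
  show ?thesis using expansion stein
    by (simp add: drift_rest_def c1_def c2_def c3_def y_def algebra_simps power2_eq_square
        power4_eq_xxxx add_divide_distrib)
qed

lemma abs_drift_rest_le:
  "\<bar>drift_rest q\<bar> \<le> eps^4 / 2 + eps^2 / 2 * EAS (\<lambda>a s. (unused q a s)^2) + 2 * l * eps^3 * EAS jump_cube"
proof -
  have "\<bar>eps^4 / 2 * f' (eps * real q)\<bar> \<le> eps^4 / 2"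
    using f'_bounded[of "eps * real q"] mult_left_mono[of _ 1 "eps^4 / 2"] by (simp add: abs_mult)
  moreover have "\<bar>f' 0 * eps^2 / 2 * EAS (\<lambda>a s. (unused q a s)^2)\<bar> \<le> eps^2 / 2 * EAS (\<lambda>a s. (unused q a s)^2)"
    using f'_bounded[of 0] EAS_unused_sq_bounds(1)[of q]
      mult_right_mono[of "\<bar>f' 0\<bar>" 1 "eps^2 / 2 * EAS (\<lambda>a s. (unused q a s)^2)"]
    by (simp add: abs_mult)
  ultimately show ?thesis
    using abs_EAS_taylor_rem_le[of q] unfolding drift_rest_def by linarith
qed

lemma integrable_drift_rest: "integrable (measure_pmf P) drift_rest"
  using integrable_EAS_unused_sq
  by (intro measure_pmf_integrable_bound[OF _ abs_drift_rest_le]) simp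

lemma stein_error_bound:
  assumes K: "0 \<le> K"
  shows "\<bar>(\<integral>q. h (eps * real q) \<partial>P) - c\<bar>
          \<le> eps^2 / 2 + (K * eps + (\<integral>s. (if K < real s then real s ^ 2 else 0) \<partial>S)) / 2
             + 2 * l * eps * EAS jump_cube"
proof -
  define tail where "tail = (\<integral>s. (if K < real s then real s ^ 2 else 0) \<partial>S)"
  define U2 where "U2 q = EAS (\<lambda>a s. (unused q a s)^2)" for q
  have integrable_h: "integrable (measure_pmf P) (\<lambda>q. h (eps * real q))"
  proof (rule measure_pmf_integrable_bound)
    show "integrable (measure_pmf P) (\<lambda>q. \<bar>h 0\<bar> + eps * real q)" using moments[of 1] by simp
    show "\<bar>h (eps * real q)\<bar> \<le> \<bar>h 0\<bar> + eps * real q" for q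
      using h_lip[of "eps * real q" 0] eps_pos by simp
  qed
  have "0 = (\<integral>q. EAS (\<lambda>a s. G_scaled (next_len q a s)) - G_scaled q \<partial>P)"
    using integral_stationary_step[OF integrable_G_scaled] integrable_G_scaled by simp
  also have "\<dots> = eps^2 * ((\<integral>q. h (eps * real q) \<partial>P) - c) + (\<integral>q. drift_rest q \<partial>P)"
    unfolding EAS_G_scaled_drift using integrable_h integrable_drift_rest by simp
  finally have "eps^2 * ((\<integral>q. h (eps * real q) \<partial>P) - c) = - (\<integral>q. drift_rest q \<partial>P)"
    by linarith
  then have "eps^2 * \<bar>(\<integral>q. h (eps * real q) \<partial>P) - c\<bar> = \<bar>\<integral>q. drift_rest q \<partial>P\<bar>"
    by (metis abs_minus_cancel abs_mult abs_power2)
  also have "\<dots> \<le> (\<integral>q. eps^4 / 2 + eps^2 / 2 * U2 q + 2 * l * eps^3 * EAS jump_cube \<partial>P)"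
    using integrable_EAS_unused_sq abs_drift_rest_le
    by (intro measure_pmf_abs_integral_le integrable_drift_rest) (simp_all add: U2_def)
  also have "\<dots> = eps^4 / 2 + eps^2 / 2 * (\<integral>q. U2 q \<partial>P) + 2 * l * eps^3 * EAS jump_cube"
    using integrable_EAS_unused_sq by (simp add: U2_def)
  also have "\<dots> \<le> eps^4 / 2 + eps^2 / 2 * (K * eps + tail) + 2 * l * eps^3 * EAS jump_cube"
    using integral_EAS_unused_sq_le[OF K] by (simp add: U2_def tail_def mult_left_mono)
  also have "\<dots> = eps^2 * (eps^2 / 2 + (K * eps + tail) / 2 + 2 * l * eps * EAS jump_cube)"
    by (simp add: algebra_simps power2_eq_square power3_eq_cube power4_eq_xxxx)
  finally show ?thesis using eps_pos by (simp add: tail_def mult_le_cancel_left_pos)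
qed

lemma EAS_jump_cube_nonneg: "0 \<le> EAS jump_cube"
  using EAS_mono[OF dominated_const dominated_jump_cube, of 0] by (simp add: jump_cube_def)

lemma rate_EAS_jump_cube_le:
  assumes "l \<le> 2 / c0" "0 < c0"
    and "(\<integral>a. (1 + real a)^3 \<partial>A) \<le> CA" "(\<integral>s. (1 + real s)^3 \<partial>S) \<le> CS"
  shows "2 * l * EAS jump_cube \<le> 8 * CA * CS / c0"
proof -
  have "0 \<le> (\<integral>a. (1 + real a)^3 \<partial>A)" "0 \<le> (\<integral>s. (1 + real s)^3 \<partial>S)"
    by (simp_all add: integral_nonneg_AE)
  then have "EAS jump_cube \<le> 2 * (CA * CS)"
    using EAS_jump_cube_le assms(3,4) order_trans[OF _ assms(3)]
    by (meson mult_left_mono mult_mono order_trans zero_le_numeral)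
  then have "2 * l * EAS jump_cube \<le> 2 * (2 / c0) * (2 * (CA * CS))"
    using assms(1,2) l_pos EAS_jump_cube_nonneg by (intro mult_mono) auto
  then show ?thesis by simp
qed

lemma stein_error_log_bound:
  assumes eps_le: "eps \<le> exp (-1)" and \<theta>: "0 < \<theta>"
    and service_tail: "(\<integral>\<^sup>+s. ennreal (exp (\<theta> * real s)) \<partial>measure_pmf S) \<le> ennreal D"
  shows "\<bar>(\<integral>q. h (eps * real q) \<partial>P) - c\<bar>
           \<le> (1/2 + 1/\<theta> + 8 * D / \<theta>^2 + 2 * l * EAS jump_cube) * eps * ln (1 / eps)"
proof -
  define L where "L = ln (1 / eps)"
  define K where "K = 2 / \<theta> * L"
  have "ln eps \<le> ln (exp (-1))" using eps_pos eps_le by (subst ln_le_cancel_iff) auto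
  then have L: "1 \<le> L" using eps_pos by (simp add: L_def ln_div)
  have eps_le_1: "eps \<le> 1" using eps_le by (meson exp_le_one_iff le_minus_one_simps(1) order_trans)
  have eps_le_eps_L: "eps \<le> eps * L" using eps_pos L by simp
  define T where "T = (\<integral>s. (if K < real s then real s ^ 2 else 0) \<partial>S)"
  have "exp (- \<theta> * K / 2) = eps"
    using \<theta> eps_pos by (simp add: K_def L_def ln_div)
  then have tail: "T \<le> 16 / \<theta>^2 * eps * D"
    using truncated_square_moment_bound[OF \<theta> service_tail, of K] by (simp add: T_def)
  have D: "1 \<le> D" by (rule exp_moment_bound(3)[OF \<theta> service_tail])
  have "\<bar>(\<integral>q. h (eps * real q) \<partial>P) - c\<bar> \<le> eps^2 / 2 + K * eps / 2 + T / 2 + 2 * l * eps * EAS jump_cube"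
    using stein_error_bound[of K] L \<theta> by (simp add: K_def T_def add_divide_distrib)
  also have "\<dots> \<le> 1/2 * (eps * L) + 1/\<theta> * (eps * L) + 8 * D / \<theta>^2 * (eps * L)
                     + 2 * l * EAS jump_cube * (eps * L)"
  proof (intro add_mono)
    show "eps^2 / 2 \<le> 1/2 * (eps * L)"
      using eps_pos eps_le_1 eps_le_eps_L by (simp add: power2_eq_square mult_left_le)
    show "K * eps / 2 \<le> 1/\<theta> * (eps * L)" by (simp add: K_def mult.commute)
    have "T / 2 \<le> 8 * D / \<theta>^2 * eps" using tail by (simp add: mult.commute)
    also have "\<dots> \<le> 8 * D / \<theta>^2 * (eps * L)" using eps_le_eps_L D by (intro mult_left_mono) auto
    finally show "T / 2 \<le> 8 * D / \<theta>^2 * (eps * L)" .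
    show "2 * l * eps * EAS jump_cube \<le> 2 * l * EAS jump_cube * (eps * L)"
      using mult_right_mono[OF eps_le_eps_L, of "2 * l * EAS jump_cube"] l_pos EAS_jump_cube_nonneg
      by (simp add: mult_ac)
  qed
  also have "\<dots> = (1/2 + 1/\<theta> + 8 * D / \<theta>^2 + 2 * l * EAS jump_cube) * eps * ln (1 / eps)"
    by (simp add: L_def algebra_simps)
  finally show ?thesis .
qed

end

section \<open>The Wasserstein bound\<close>

definition queue_error_const :: "real \<Rightarrow> real \<Rightarrow> real \<Rightarrow> real \<Rightarrow> real \<Rightarrow> real" where
  "queue_error_const c0 \<theta>A DA \<theta>S DS =
     1/2 + 1/\<theta>S + 8 * DS / \<theta>S^2 + 8 * cube_moment_const \<theta>A DA * cube_moment_const \<theta>S DS / c0"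

lemma stationary_queue_lipschitz_error:
  fixes A S P :: "nat pmf" and h :: "real \<Rightarrow> real" and eps c0 \<theta>A \<theta>S DA DS :: real
  defines "V \<equiv> measure_pmf.variance A real + measure_pmf.variance S real"
  assumes stationary: "stationary_queue A S P"
    and moments: "\<And>k. integrable (measure_pmf P) (\<lambda>q. real q ^ k)"
    and mean_gap: "measure_pmf.expectation A real = measure_pmf.expectation S real - eps"
    and eps: "0 < eps" "eps \<le> exp (-1)"
    and c0: "0 < c0" "c0 \<le> V"
    and \<theta>: "0 < \<theta>A" "0 < \<theta>S"
    and arrival_tail: "(\<integral>\<^sup>+a. ennreal (exp (\<theta>A * real a)) \<partial>measure_pmf A) \<le> ennreal DA"
    and service_tail: "(\<integral>\<^sup>+s. ennreal (exp (\<theta>S * real s)) \<partial>measure_pmf S) \<le> ennreal DS"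
    and h_lip: "\<And>x y. \<bar>h x - h y\<bar> \<le> \<bar>x - y\<bar>"
  shows "\<bar>(\<integral>q. h (eps * real q) \<partial>P) - (\<integral>z. h z \<partial>density lborel (exponential_density (2 / V)))\<bar>
           \<le> queue_error_const c0 \<theta>A DA \<theta>S DS * eps * ln (1 / eps)"
proof -
  define l where "l = 2 / V"
  have l: "0 < l" "l * V = 2" "l \<le> 2 / c0"
    using c0 by (auto simp: l_def intro: divide_left_mono)
  note arrival_cube = cube_moment_bound[OF \<theta>(1) arrival_tail]
  note service_cube = cube_moment_bound[OF \<theta>(2) service_tail]
  interpret queue_stein A S P eps l h
    using arrival_cube(1) service_cube(1) stationary moments eps(1) mean_gap l(1,2) h_lip
    by unfold_locales (simp_all add: stationary_queue_def V_def)
  have "2 * l * EAS jump_cube \<le> 8 * cube_moment_const \<theta>A DA * cube_moment_const \<theta>S DS / c0"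
    using l(3) c0(1) arrival_cube(2) service_cube(2) by (rule rate_EAS_jump_cube_le)
  then have const_le: "1/2 + 1/\<theta>S + 8 * DS / \<theta>S^2 + 2 * l * EAS jump_cube
                       \<le> queue_error_const c0 \<theta>A DA \<theta>S DS"
    by (simp add: queue_error_const_def)
  have "\<bar>(\<integral>q. h (eps * real q) \<partial>P) - c\<bar>
          \<le> (1/2 + 1/\<theta>S + 8 * DS / \<theta>S^2 + 2 * l * EAS jump_cube) * eps * ln (1 / eps)"
    by (rule stein_error_log_bound[OF eps(2) \<theta>(2) service_tail])
  also have "\<dots> \<le> queue_error_const c0 \<theta>A DA \<theta>S DS * eps * ln (1 / eps)"
  proof -
    have "eps \<le> 1" using eps(2) exp_le_one_iff[of "-1"] by linarith
    then have "1 \<le> 1 / eps" using eps(1) by simp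
    then have "0 \<le> eps * ln (1 / eps)" using eps by simp
    then show ?thesis using mult_right_mono[OF const_le] by (simp add: mult.assoc)
  qed
  moreover have "c = (\<integral>z. h z \<partial>density lborel (exponential_density (2 / V)))"
    unfolding c_def by (simp add: l_def)
  ultimately show ?thesis by simp
qed

lemma wasserstein_distr_pmf_le:
  fixes P :: "'a pmf" and g :: "'a \<Rightarrow> real" and N :: "real measure"
  assumes "\<And>h. (\<And>x y. \<bar>h x - h y\<bar> \<le> \<bar>x - y\<bar>) \<Longrightarrow> \<bar>(\<integral>q. h (g q) \<partial>P) - (\<integral>x. h x \<partial>N)\<bar> \<le> B"
  shows "wasserstein (distr (measure_pmf P) borel g) N \<le> ereal B"
  unfolding wasserstein_def
proof (rule SUP_least)
  fix h :: "real \<Rightarrow> real" assume "h \<in> {h. \<forall>x y. \<bar>h x - h y\<bar> \<le> \<bar>x - y\<bar>}"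
  then have lip: "\<And>x y. \<bar>h x - h y\<bar> \<le> \<bar>x - y\<bar>" by simp
  have "h \<in> borel_measurable borel"
    by (intro borel_measurable_continuous_onI lipschitz_on_continuous_on[of 1] lipschitz_onI)
       (auto simp: dist_real_def lip)
  then have "(\<integral>x. h x \<partial>distr (measure_pmf P) borel g) = (\<integral>q. h (g q) \<partial>P)"
    by (intro integral_distr) auto
  then show "ereal \<bar>(\<integral>x. h x \<partial>distr (measure_pmf P) borel g) - (\<integral>x. h x \<partial>N)\<bar> \<le> ereal B"
    using assms[OF lip] by simp
qed

theorem theorem2:
  fixes Arr :: "real \<Rightarrow> nat pmf" and Srv :: "nat pmf" and Pi :: "real \<Rightarrow> nat pmf"
    and \<mu> c0 \<theta>1 \<theta>2 D1 D2 :: real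
  assumes mu_pos: "\<mu> > 0"
    and srv_mean: "measure_pmf.expectation Srv real = \<mu>"
    and arr_mean: "\<And>\<epsilon>. 0 < \<epsilon> \<Longrightarrow> \<epsilon> < \<mu> \<Longrightarrow> measure_pmf.expectation (Arr \<epsilon>) real = \<mu> - \<epsilon>"
    and c0_pos: "c0 > 0"
    and var_lb: "\<And>\<epsilon>. 0 < \<epsilon> \<Longrightarrow> \<epsilon> < \<mu> \<Longrightarrow>
        measure_pmf.variance (Arr \<epsilon>) real + measure_pmf.variance Srv real \<ge> c0"
    and theta_pos: "\<theta>1 > 0" "\<theta>2 > 0"
    and arr_tail: "\<And>\<epsilon>. 0 < \<epsilon> \<Longrightarrow> \<epsilon> < \<mu> \<Longrightarrow>
        (\<integral>\<^sup>+ a. ennreal (exp (\<theta>1 * real a)) \<partial>measure_pmf (Arr \<epsilon>)) \<le> ennreal D1"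
    and srv_tail: "(\<integral>\<^sup>+ s. ennreal (exp (\<theta>2 * real s)) \<partial>measure_pmf Srv) \<le> ennreal D2"
    and stat: "\<And>\<epsilon>. 0 < \<epsilon> \<Longrightarrow> \<epsilon> < \<mu> \<Longrightarrow> stationary_queue (Arr \<epsilon>) Srv (Pi \<epsilon>)"
    and moments: "\<And>\<epsilon> k. 0 < \<epsilon> \<Longrightarrow> \<epsilon> < \<mu> \<Longrightarrow>
        integrable (measure_pmf (Pi \<epsilon>)) (\<lambda>q. real q ^ k)"
  shows "\<exists>C \<epsilon>0. 0 < \<epsilon>0 \<and> \<epsilon>0 < \<mu> \<and>
     (\<forall>\<epsilon>. 0 < \<epsilon> \<and> \<epsilon> \<le> \<epsilon>0 \<longrightarrow>
        wasserstein (distr (measure_pmf (Pi \<epsilon>)) borel (\<lambda>q. \<epsilon> * real q))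
          (density lborel (exponential_density
             (2 / (measure_pmf.variance (Arr \<epsilon>) real + measure_pmf.variance Srv real))))
        \<le> ereal (C * \<epsilon> * ln (1 / \<epsilon>)))"
proof (intro exI conjI allI impI)
  define \<epsilon>0 where "\<epsilon>0 = min (\<mu> / 2) (exp (-1))"
  show "0 < \<epsilon>0" "\<epsilon>0 < \<mu>" using mu_pos by (auto simp: \<epsilon>0_def)
  fix \<epsilon> assume "0 < \<epsilon> \<and> \<epsilon> \<le> \<epsilon>0"
  then have "0 < \<epsilon>" "\<epsilon> < \<mu>" "\<epsilon> \<le> exp (-1)" using mu_pos by (auto simp: \<epsilon>0_def)
  then show "wasserstein (distr (measure_pmf (Pi \<epsilon>)) borel (\<lambda>q. \<epsilon> * real q))
          (density lborel (exponential_density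
             (2 / (measure_pmf.variance (Arr \<epsilon>) real + measure_pmf.variance Srv real))))
        \<le> ereal (queue_error_const c0 \<theta>1 D1 \<theta>2 D2 * \<epsilon> * ln (1 / \<epsilon>))"
    by (intro wasserstein_distr_pmf_le stationary_queue_lipschitz_error[OF stat moments _ _ _
          c0_pos var_lb theta_pos arr_tail srv_tail])
       (simp_all add: arr_mean srv_mean)
qed

end
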